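(* Let $K\ge3$ and let $X_1,\dots,X_K\in\mathbb{R}^d$ be i.i.d. Gaussian with mean $\bar\mu$ and covariance matrix $\Gamma$. For any permutation $(i_1,\dots,i_K)$ of $(1,\dots,K)$, any integer $k\in\{2,\dots,K-1\}$ and any fixed $\beta\in\mathbb{R}^d$, $$\mathbb{E}\big[X_{i_k}X_{i_k}^\top\mathbb{1}\{X_{i_1}^\top\beta<\dots<X_{i_K}^\top\beta\}\big]\preccurlyeq\mathbb{E}\big[X_{i_1}X_{i_1}^\top\mathbb{1}\{X_{i_1}^\top\beta<\dots<X_{i_K}^\top\beta\}\big]+\mathbb{E}\big[X_{i_K}X_{i_K}^\top\mathbb{1}\{X_{i_1}^\top\beta<\dots<X_{i_K}^\top\beta\}\big].$$
   Context: $\preccurlyeq$ denotes the Loewner (positive semidefinite) order. *)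

theory Defs
  imports "HOL-Probability.Probability"
begin

definition normal_measure :: "real \<Rightarrow> real \<Rightarrow> real measure" where
  "normal_measure m s2 =
     (if s2 = 0 then return borel m else density lborel (normal_density m (sqrt s2)))"

text \<open>Multivariate Gaussian random vector with mean mu and covariance Cov,
  defined via all one-dimensional projections (Cramer--Wold).\<close>
definition gaussian_vec ::
  "'a measure \<Rightarrow> ('a \<Rightarrow> real^'d) \<Rightarrow> real^'d \<Rightarrow> real^'d^'d \<Rightarrow> bool" where
  "gaussian_vec M X mu Cov \<longleftrightarrow>
     X \<in> borel_measurable M \<and>
     (\<forall>v. distr M borel (\<lambda>\<omega>. v \<bullet> X \<omega>) = normal_measure (v \<bullet> mu) (v \<bullet> (Cov *v v)))"

definition outer :: "real^'d \<Rightarrow> real^'d^'d" where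
  "outer x = (\<chi> i j. x $ i * x $ j)"

definition psd_matrix :: "real^'d^'d \<Rightarrow> bool" where
  "psd_matrix A \<longleftrightarrow> transpose A = A \<and> (\<forall>x. 0 \<le> x \<bullet> (A *v x))"

definition loewner_le :: "real^'d^'d \<Rightarrow> real^'d^'d \<Rightarrow> bool" (infix "\<preceq>\<^sub>L" 50) where
  "A \<preceq>\<^sub>L B \<longleftrightarrow> psd_matrix (B - A)"

end

(*
  Write x = c * beta + w with w orthogonal to beta in the covariance inner product (possible since
  Cov is positive semidefinite). For a Gaussian vector X, the projections w . X and beta . X are then
  independent, so on any event that depends on X only through t = beta . X the second moment
  (x . X)^2 may be replaced by q(t) = (c t + w . mu)^2 + w . Cov w. By independence of the samples,
  the ordering event is of this kind for each of them separately. On that event beta . X_(i_k) lies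
  between beta . X_(i_1) and beta . X_(i_K), hence so does the affine value c t + w . mu, and therefore
  q at the middle sample is at most the sum of q at the two extreme ones.

  The independence of covariance-orthogonal projections is derived from the factorisation of their
  joint characteristic function: reweighting the law by a bounded nonnegative function of one variable
  does not change the characteristic function of the other, so by Levy's uniqueness theorem it does not
  change its law either.
*)
theory Submission
  imports Defs
begin


section \<open>Gaussian laws\<close>

lemma char_normal_measure:
  assumes "s2 \<ge> 0"
  shows "char (normal_measure m s2) t = iexp (t * m) * complex_of_real (exp (- (s2 * t^2) / 2))"
proof (cases "s2 = 0")
  case True
  then show ?thesis by (simp add: normal_measure_def char_def integral_return)
next
  case False
  define \<sigma> where "\<sigma> = sqrt s2"
  have \<sigma>: "\<sigma> > 0" "s2 = \<sigma>^2" using assms False by (simp_all add: \<sigma>_def)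
  have "char (normal_measure m s2) t = (CLINT x|lborel. normal_density m \<sigma> x *\<^sub>R iexp (t * x))"
    using False unfolding normal_measure_def char_def \<sigma>_def
    by simp (subst integral_density, auto)
  also have "\<dots> = \<sigma> *\<^sub>R (CLINT x|lborel. normal_density m \<sigma> (m + \<sigma> * x) *\<^sub>R iexp (t * (m + \<sigma> * x)))"
    using \<sigma> by (subst lborel_integral_real_affine[where c=\<sigma> and t=m]) auto
  also have "\<dots> = (CLINT x|lborel. iexp (t * m) * (std_normal_density x *\<^sub>R iexp ((t * \<sigma>) * x)))"
  proof -
    have "\<sigma> * normal_density m \<sigma> (m + \<sigma> * x) = std_normal_density x" for x
      using \<sigma> by (simp add: normal_density_def real_sqrt_mult power_mult_distrib field_simps)
    moreover have "iexp (t * (m + \<sigma> * x)) = iexp (t * m) * iexp ((t * \<sigma>) * x)" for x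
      by (simp add: algebra_simps exp_add[symmetric])
    ultimately have "\<sigma> *\<^sub>R (normal_density m \<sigma> (m + \<sigma> * x) *\<^sub>R iexp (t * (m + \<sigma> * x)))
       = iexp (t * m) * (std_normal_density x *\<^sub>R iexp ((t * \<sigma>) * x))" for x
      by (metis mult.left_commute scaleR_scaleR scaleR_conv_of_real mult_scaleR_right)
    then show ?thesis by (simp add: integral_scaleR_right[symmetric])
  qed
  also have "\<dots> = iexp (t * m) * (CLINT x|lborel. std_normal_density x *\<^sub>R iexp ((t * \<sigma>) * x))"
    by (rule integral_mult_right_zero)
  also have "\<dots> = iexp (t * m) * char std_normal_distribution (t * \<sigma>)"
    unfolding char_def by (subst integral_density) auto
  also have "\<dots> = iexp (t * m) * complex_of_real (exp (- (s2 * t^2) / 2))"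
    by (simp add: char_std_normal_distribution \<sigma>(2) power_mult_distrib mult.commute)
  finally show ?thesis .
qed

lemma normal_measure_moments:
  assumes "s2 \<ge> 0"
  shows "integrable (normal_measure m s2) (\<lambda>x. x)" "integrable (normal_measure m s2) (\<lambda>x. x^2)"
    and "(LINT x|normal_measure m s2. x) = m" "(LINT x|normal_measure m s2. (x - m)^2) = s2"
proof -
  have "integrable (normal_measure m s2) (\<lambda>x. x) \<and> integrable (normal_measure m s2) (\<lambda>x. x^2) \<and>
    (LINT x|normal_measure m s2. x) = m \<and> (LINT x|normal_measure m s2. (x - m)^2) = s2"
  proof (cases "s2 = 0")
    case True
    then show ?thesis
      by (simp add: normal_measure_def integrable_iff_bounded nn_integral_return integral_return)
  next
    case False
    define \<sigma> where "\<sigma> = sqrt s2"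
    have \<sigma>: "\<sigma> > 0" "s2 = \<sigma>^2" using assms False by (simp_all add: \<sigma>_def)
    have N: "normal_measure m s2 = density lborel (normal_density m \<sigma>)"
      using False by (simp add: normal_measure_def \<sigma>_def)
    have int1: "integrable lborel (\<lambda>x. normal_density m \<sigma> x * x)"
      by (rule integrable_normal_moment_nz_1[OF \<sigma>(1)])
    have int2: "integrable lborel (\<lambda>x. normal_density m \<sigma> x * (x - m)^2)"
      by (rule integrable_normal_moment[OF \<sigma>(1)])
    have "integrable lborel (\<lambda>x. normal_density m \<sigma> x * (x - m)^2 + 2 * m * (normal_density m \<sigma> x * x)
        - m^2 * normal_density m \<sigma> x)"
      by (intro Bochner_Integration.integrable_diff Bochner_Integration.integrable_add
          integrable_mult_right int1 int2 integrable_normal_density[OF \<sigma>(1)])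
    then have "integrable lborel (\<lambda>x. normal_density m \<sigma> x * x^2)"
      by (rule back_subst[of "integrable lborel"]) (auto simp: power2_eq_square algebra_simps)
    moreover have "(LINT x|lborel. normal_density m \<sigma> x * (x - m)^2) = \<sigma>^2"
      using integral_normal_moment_even[OF \<sigma>(1), of m 1] by (simp add: power2_eq_square)
    ultimately show ?thesis
      unfolding N using int1 int2 integral_normal_moment_nz_1[OF \<sigma>(1)]
      by (simp add: integrable_density integral_density \<sigma>(2))
  qed
  then show "integrable (normal_measure m s2) (\<lambda>x. x)" "integrable (normal_measure m s2) (\<lambda>x. x^2)"
    and "(LINT x|normal_measure m s2. x) = m" "(LINT x|normal_measure m s2. (x - m)^2) = s2"
    by auto
qed

lemma (in prob_space) gaussian_vec_inner:
  assumes X: "gaussian_vec M X mu Cov" and Cov: "psd_matrix Cov"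
  shows "distr M borel (\<lambda>\<omega>. u \<bullet> X \<omega>) = normal_measure (u \<bullet> mu) (u \<bullet> (Cov *v u))"
    and "integrable M (\<lambda>\<omega>. u \<bullet> X \<omega>)" "integrable M (\<lambda>\<omega>. (u \<bullet> X \<omega>)^2)"
    and "expectation (\<lambda>\<omega>. u \<bullet> X \<omega>) = u \<bullet> mu" "expectation (\<lambda>\<omega>. (u \<bullet> X \<omega> - u \<bullet> mu)^2) = u \<bullet> (Cov *v u)"
proof -
  have [measurable]: "X \<in> borel_measurable M" using X by (simp add: gaussian_vec_def)
  show D: "distr M borel (\<lambda>\<omega>. u \<bullet> X \<omega>) = normal_measure (u \<bullet> mu) (u \<bullet> (Cov *v u))"
    using X by (simp add: gaussian_vec_def)
  have "0 \<le> u \<bullet> (Cov *v u)" using Cov by (simp add: psd_matrix_def)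
  note moments = normal_measure_moments[OF this, of "u \<bullet> mu", folded D]
  show "integrable M (\<lambda>\<omega>. u \<bullet> X \<omega>)" "integrable M (\<lambda>\<omega>. (u \<bullet> X \<omega>)^2)"
    using moments(1,2) by (simp_all add: integrable_distr_eq)
  show "expectation (\<lambda>\<omega>. u \<bullet> X \<omega>) = u \<bullet> mu"
    using moments(3) by (simp add: integral_distr)
  show "expectation (\<lambda>\<omega>. (u \<bullet> X \<omega> - u \<bullet> mu)^2) = u \<bullet> (Cov *v u)"
    using moments(4) by (simp add: integral_distr)
qed

section \<open>Independence from a factorising joint characteristic function\<close>

lemma (in prob_space) expectation_indicator_vimage:
  assumes "Z \<in> measurable M N" "A \<in> sets N"
  shows "(LINT \<omega>|M. indicator A (Z \<omega>)) = prob (Z -` A \<inter> space M)"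
proof -
  have "(LINT \<omega>|M. indicator A (Z \<omega>)) = (LINT \<omega>|M. indicator (Z -` A \<inter> space M) \<omega> :: real)"
    by (rule Bochner_Integration.integral_cong) (auto simp: indicator_def)
  then show ?thesis using assms by (simp add: measurable_sets)
qed

lemma (in prob_space) weighted_Levy_uniqueness:
  fixes Z W :: "'a \<Rightarrow> real"
  assumes [measurable]: "Z \<in> borel_measurable M" and W: "integrable M W" "\<And>\<omega>. 0 \<le> W \<omega>"
    and char_W: "\<And>s. (CLINT \<omega>|M. W \<omega> *\<^sub>R iexp (s * Z \<omega>)) = expectation W *\<^sub>R char (distr M borel Z) s"
    and [measurable]: "A \<in> sets borel"
  shows "(LINT \<omega>|M. W \<omega> * indicator A (Z \<omega>)) = expectation W * prob (Z -` A \<inter> space M)"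
proof (cases "expectation W = 0")
  case True
  then have "AE \<omega> in M. W \<omega> = 0"
    using integral_nonneg_eq_0_iff_AE[OF W(1)] W(2) by simp
  then have "AE \<omega> in M. W \<omega> * indicator A (Z \<omega>) = 0" by auto
  then show ?thesis using True by (simp add: integral_eq_zero_AE)
next
  case False
  define c where "c = expectation W"
  have c: "c > 0" using False W by (simp add: c_def integral_nonneg order_le_neq_trans)
  have [measurable]: "W \<in> borel_measurable M" using W(1) by auto
  define D where "D = density M (\<lambda>\<omega>. ennreal (W \<omega> / c))"
  have "emeasure D (space D) = ennreal (LINT \<omega>|M. W \<omega> / c)"
    unfolding D_def using W c
    by (simp add: emeasure_density nn_integral_eq_integral del: integral_divide_zero)
  then interpret D: prob_space D
    using c by (intro prob_spaceI) (simp add: c_def)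
  have [measurable]: "Z \<in> borel_measurable D" by (simp add: D_def)
  have integral_D: "(LINT \<omega>|D. f (Z \<omega>)) = (LINT \<omega>|M. W \<omega> *\<^sub>R f (Z \<omega>)) /\<^sub>R c"
    if [measurable]: "f \<in> borel_measurable borel" for f :: "real \<Rightarrow> 'b::{banach, second_countable_topology}"
    unfolding D_def using W c
    by (simp add: integral_density divide_inverse_commute integral_scaleR_right[symmetric]
        scaleR_scaleR del: integral_scaleR_right)
  have "char (distr D borel Z) = char (distr M borel Z)"
  proof
    fix s
    show "char (distr D borel Z) s = char (distr M borel Z) s"
      using integral_D[of "\<lambda>x. iexp (s * x)"] char_W[of s] c
      by (simp add: char_def integral_distr c_def)
  qed
  then have "distr D borel Z = distr M borel Z"
    by (intro Levy_uniqueness D.real_distribution_distr real_distribution_distr) simp_all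
  then have "measure (distr D borel Z) A = prob (Z -` A \<inter> space M)"
    by (simp add: measure_distr)
  moreover have "measure (distr D borel Z) A = (LINT \<omega>|D. indicator A (Z \<omega>))"
    by (simp add: D.expectation_indicator_vimage[of Z borel] measure_distr)
  ultimately have "prob (Z -` A \<inter> space M) = (LINT \<omega>|M. W \<omega> * indicator A (Z \<omega>)) / c"
    using integral_D[of "indicator A :: real \<Rightarrow> real"] by (simp add: divide_inverse_commute)
  then show ?thesis using c by (simp add: c_def field_simps)
qed

lemma (in prob_space) weighted_Levy_uniqueness_bounded:
  fixes Z W :: "'a \<Rightarrow> real"
  assumes [measurable]: "Z \<in> borel_measurable M" "W \<in> borel_measurable M"
    and bounded: "\<And>\<omega>. \<bar>W \<omega>\<bar> \<le> B"
    and char_W: "\<And>s. (CLINT \<omega>|M. W \<omega> *\<^sub>R iexp (s * Z \<omega>)) = expectation W *\<^sub>R char (distr M borel Z) s"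
    and [measurable]: "A \<in> sets borel"
  shows "(LINT \<omega>|M. W \<omega> * indicator A (Z \<omega>)) = expectation W * prob (Z -` A \<inter> space M)"
proof -
  have int_W: "integrable M W"
    using bounded by (intro integrable_const_bound[where B=B]) auto
  have int_iexp: "integrable M (\<lambda>\<omega>. iexp (s * Z \<omega>))" for s
    by (intro integrable_iexp) auto
  have int_W_iexp: "integrable M (\<lambda>\<omega>. W \<omega> *\<^sub>R iexp (s * Z \<omega>))" for s
    using bounded by (intro integrable_const_bound[where B=B]) (auto simp: norm_mult)
  have int_WA: "integrable M (\<lambda>\<omega>. W \<omega> * indicator A (Z \<omega>))"
    using bounded order_trans[OF abs_ge_zero bounded]
    by (intro integrable_const_bound[where B=B]) (auto simp: indicator_def)
  have int_A: "integrable M (\<lambda>\<omega>. indicator A (Z \<omega>) :: real)"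
    by (intro integrable_const_bound[where B=1]) auto
  have "(LINT \<omega>|M. (W \<omega> + B) * indicator A (Z \<omega>)) = expectation (\<lambda>\<omega>. W \<omega> + B) * prob (Z -` A \<inter> space M)"
  proof (rule weighted_Levy_uniqueness)
    show "integrable M (\<lambda>\<omega>. W \<omega> + B)" "0 \<le> W \<omega> + B" for \<omega>
      using int_W bounded[of \<omega>] by auto
    show "(CLINT \<omega>|M. (W \<omega> + B) *\<^sub>R iexp (s * Z \<omega>)) =
        expectation (\<lambda>\<omega>. W \<omega> + B) *\<^sub>R char (distr M borel Z) s" for s
      using char_W[of s] int_W int_iexp[of s] int_W_iexp[of s]
      by (simp add: scaleR_add_left char_def integral_distr prob_space)
  qed auto
  then show ?thesis
    using int_W int_WA int_A expectation_indicator_vimage[of Z borel A]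
    by (simp add: distrib_right prob_space)
qed

lemma (in prob_space) integral_cos_indicator_factor:
  fixes Z Y :: "'a \<Rightarrow> real"
  assumes [measurable]: "Z \<in> borel_measurable M" "Y \<in> borel_measurable M"
    and char_joint: "\<And>s t. (CLINT \<omega>|M. iexp (s * Z \<omega> + t * Y \<omega>)) =
      char (distr M borel Z) s * char (distr M borel Y) t"
    and [measurable]: "A \<in> sets borel"
  shows "(LINT \<omega>|M. cos (t * Y \<omega> + \<theta>) * indicator A (Z \<omega>)) =
    expectation (\<lambda>\<omega>. cos (t * Y \<omega> + \<theta>)) * prob (Z -` A \<inter> space M)"
proof (rule weighted_Levy_uniqueness_bounded[where B=1])
  define C where "C = (iexp \<theta> * char (distr M borel Y) t + iexp (- \<theta>) * char (distr M borel Y) (- t)) / 2"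
  have cos_iexp: "complex_of_real (cos x) = (iexp x + iexp (- x)) / 2" for x
    by (simp add: Re_exp Im_exp complex_eq_iff)
  have weighted: "(CLINT \<omega>|M. cos (t * Y \<omega> + \<theta>) *\<^sub>R iexp (s * Z \<omega>)) = char (distr M borel Z) s * C" for s
  proof -
    have int: "integrable M (\<lambda>\<omega>. iexp (s * Z \<omega> + u * Y \<omega>))" for u
      by (intro integrable_iexp) auto
    have "(CLINT \<omega>|M. cos (t * Y \<omega> + \<theta>) *\<^sub>R iexp (s * Z \<omega>)) =
        (CLINT \<omega>|M. (iexp \<theta> * iexp (s * Z \<omega> + t * Y \<omega>) + iexp (- \<theta>) * iexp (s * Z \<omega> + (- t) * Y \<omega>)) / 2)"
      by (intro Bochner_Integration.integral_cong)
        (simp_all add: scaleR_conv_of_real cos_iexp field_simps flip: exp_add)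
    also have "\<dots> = (iexp \<theta> * (CLINT \<omega>|M. iexp (s * Z \<omega> + t * Y \<omega>)) +
        iexp (- \<theta>) * (CLINT \<omega>|M. iexp (s * Z \<omega> + (- t) * Y \<omega>))) / 2"
      using int[of t] int[of "- t"] by (simp del: of_real_add of_real_mult of_real_minus)
    finally show ?thesis
      by (simp only: char_joint) (simp add: C_def field_simps)
  qed
  have "complex_of_real (expectation (\<lambda>\<omega>. cos (t * Y \<omega> + \<theta>))) = C"
    using weighted[of 0] real_distribution.char_zero[OF real_distribution_distr[of Z]] by (simp add: scaleR_conv_of_real)
  then show "(CLINT \<omega>|M. cos (t * Y \<omega> + \<theta>) *\<^sub>R iexp (s * Z \<omega>)) =
      expectation (\<lambda>\<omega>. cos (t * Y \<omega> + \<theta>)) *\<^sub>R char (distr M borel Z) s" for s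
    using weighted[of s] by (simp add: scaleR_conv_of_real mult.commute)
qed auto

lemma (in prob_space) integral_indicator_scaleR_iexp_factor:
  fixes Z Y :: "'a \<Rightarrow> real"
  assumes [measurable]: "Z \<in> borel_measurable M" "Y \<in> borel_measurable M"
    and char_joint: "\<And>s t. (CLINT \<omega>|M. iexp (s * Z \<omega> + t * Y \<omega>)) =
      char (distr M borel Z) s * char (distr M borel Y) t"
    and [measurable]: "A \<in> sets borel"
  shows "(CLINT \<omega>|M. indicator A (Z \<omega>) *\<^sub>R iexp (s * Y \<omega>)) =
    prob (Z -` A \<inter> space M) *\<^sub>R char (distr M borel Y) s"
proof -
  note cos_factor = integral_cos_indicator_factor[OF assms]
  have int_iexp: "integrable M (\<lambda>\<omega>. iexp (s * Y \<omega>))"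
    by (intro integrable_iexp) auto
  have int_A_iexp: "integrable M (\<lambda>\<omega>. indicator A (Z \<omega>) *\<^sub>R iexp (s * Y \<omega>))"
    by (intro integrable_const_bound[where B=1]) (auto simp: indicator_def)
  have char_Y: "char (distr M borel Y) s = (CLINT \<omega>|M. iexp (s * Y \<omega>))"
    by (simp add: char_def integral_distr)
  have "(LINT \<omega>|M. cos (s * Y \<omega>) * indicator A (Z \<omega>)) = expectation (\<lambda>\<omega>. cos (s * Y \<omega>)) * prob (Z -` A \<inter> space M)"
    using cos_factor[of s 0] by simp
  moreover have "(LINT \<omega>|M. sin (s * Y \<omega>) * indicator A (Z \<omega>)) = expectation (\<lambda>\<omega>. sin (s * Y \<omega>)) * prob (Z -` A \<inter> space M)"
    using cos_factor[of s "- (pi / 2)"] by (simp add: cos_diff)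
  ultimately show ?thesis
    using int_iexp int_A_iexp unfolding char_Y
    by (simp add: complex_eq_iff integral_Re[symmetric] integral_Im[symmetric] Re_exp Im_exp mult_ac
        del: integral_Re integral_Im)
qed

lemma (in prob_space) char_product_imp_indep_var:
  fixes Z Y :: "'a \<Rightarrow> real"
  assumes [measurable]: "Z \<in> borel_measurable M" "Y \<in> borel_measurable M"
    and char_joint: "\<And>s t. (CLINT \<omega>|M. iexp (s * Z \<omega> + t * Y \<omega>)) =
      char (distr M borel Z) s * char (distr M borel Y) t"
  shows "indep_var borel Z borel Y"
proof -
  have prob_times: "prob ((\<lambda>\<omega>. (Z \<omega>, Y \<omega>)) -` (A \<times> B) \<inter> space M) =
      prob (Z -` A \<inter> space M) * prob (Y -` B \<inter> space M)"
    if [measurable]: "A \<in> sets borel" "B \<in> sets borel" for A B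
  proof -
    have "(LINT \<omega>|M. indicator A (Z \<omega>) * indicator B (Y \<omega>)) =
        expectation (\<lambda>\<omega>. indicator A (Z \<omega>)) * prob (Y -` B \<inter> space M)"
      using integral_indicator_scaleR_iexp_factor[OF assms]
      by (intro weighted_Levy_uniqueness)
        (auto intro: integrable_const_bound[where B=1] simp: expectation_indicator_vimage[of Z borel])
    then show ?thesis
      using expectation_indicator_vimage[of "\<lambda>\<omega>. (Z \<omega>, Y \<omega>)" "borel \<Otimes>\<^sub>M borel" "A \<times> B"]
      by (simp add: expectation_indicator_vimage[of Z borel] indicator_times)
  qed
  show ?thesis
    unfolding indep_var_distribution_eq
  proof (intro conjI)
    show "distr M borel Z \<Otimes>\<^sub>M distr M borel Y = distr M (borel \<Otimes>\<^sub>M borel) (\<lambda>\<omega>. (Z \<omega>, Y \<omega>))"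
    proof (rule pair_measure_eqI)
      fix A B assume "A \<in> sets (distr M borel Z)" "B \<in> sets (distr M borel Y)"
      then show "emeasure (distr M borel Z) A * emeasure (distr M borel Y) B =
          emeasure (distr M (borel \<Otimes>\<^sub>M borel) (\<lambda>\<omega>. (Z \<omega>, Y \<omega>))) (A \<times> B)"
        by (simp add: emeasure_distr emeasure_eq_measure prob_times ennreal_mult)
    qed (auto intro!: prob_space_imp_sigma_finite prob_space_distr)
  qed auto
qed

section \<open>Covariance-orthogonal projections of a Gaussian vector\<close>

lemma symmetric_matrix_inner_commute:
  fixes A :: "real^'n^'n"
  assumes "transpose A = A"
  shows "x \<bullet> (A *v y) = y \<bullet> (A *v x)"
  by (metis assms dot_lmul_matrix inner_commute transpose_matrix_vector)

lemma psd_matrix_orthogonal_decomposition: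
  fixes C :: "real^'n^'n"
  assumes psd: "psd_matrix C"
  obtains c w where "v = c *\<^sub>R b + w" "w \<bullet> (C *v b) = 0"
proof -
  have sym: "transpose C = C" using psd by (simp add: psd_matrix_def)
  have cross_zero: "v \<bullet> (C *v b) = 0" if degenerate: "b \<bullet> (C *v b) = 0"
  proof (rule ccontr)
    assume nz: "v \<bullet> (C *v b) \<noteq> 0"
    have form: "(v + r *\<^sub>R b) \<bullet> (C *v (v + r *\<^sub>R b)) = v \<bullet> (C *v v) + 2 * r * (v \<bullet> (C *v b))" for r
      using degenerate symmetric_matrix_inner_commute[OF sym, of b v]
      by (simp add: matrix_vector_right_distrib matrix_vector_mult_scaleR inner_add_left inner_add_right
          algebra_simps)
    define r where "r = - (v \<bullet> (C *v v) + 1) / (2 * (v \<bullet> (C *v b)))"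
    have "0 \<le> (v + r *\<^sub>R b) \<bullet> (C *v (v + r *\<^sub>R b))" using psd by (simp add: psd_matrix_def)
    also have "\<dots> = -1" unfolding form r_def using nz by (simp add: field_simps)
    finally show False by simp
  qed
  \<comment> \<open>If b is C-null the division yields c = 0, and v itself is C-orthogonal to b.\<close>
  define c where "c = (v \<bullet> (C *v b)) / (b \<bullet> (C *v b))"
  show thesis
  proof
    show "v = c *\<^sub>R b + (v - c *\<^sub>R b)" by simp
    show "(v - c *\<^sub>R b) \<bullet> (C *v b) = 0"
      using cross_zero by (cases "b \<bullet> (C *v b) = 0") (simp_all add: c_def inner_diff_left)
  qed
qed

lemma (in prob_space) gaussian_vec_indep_inner:
  fixes X :: "'a \<Rightarrow> real^'d"
  assumes X: "gaussian_vec M X mu Cov" and psd: "psd_matrix Cov"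
    and orthogonal: "w \<bullet> (Cov *v b) = 0"
  shows "indep_var borel (\<lambda>\<omega>. w \<bullet> X \<omega>) borel (\<lambda>\<omega>. b \<bullet> X \<omega>)"
proof -
  have [measurable]: "X \<in> borel_measurable M" using X by (simp add: gaussian_vec_def)
  have "b \<bullet> (Cov *v w) = 0"
    using orthogonal symmetric_matrix_inner_commute[of Cov w b] psd by (simp add: psd_matrix_def)
  then have variance_split: "(s *\<^sub>R w + t *\<^sub>R b) \<bullet> (Cov *v (s *\<^sub>R w + t *\<^sub>R b)) =
      s^2 * (w \<bullet> (Cov *v w)) + t^2 * (b \<bullet> (Cov *v b))" for s t
    using orthogonal
    by (simp add: matrix_vector_right_distrib matrix_vector_mult_scaleR inner_add_left inner_add_right
        power2_eq_square algebra_simps)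
  have char_inner: "char (distr M borel (\<lambda>\<omega>. u \<bullet> X \<omega>)) s =
      iexp (s * (u \<bullet> mu)) * complex_of_real (exp (- ((u \<bullet> (Cov *v u)) * s^2) / 2))" for u s
    using psd by (simp add: gaussian_vec_inner(1)[OF X psd] char_normal_measure psd_matrix_def)
  show ?thesis
  proof (rule char_product_imp_indep_var)
    fix s t :: real
    define u where "u = s *\<^sub>R w + t *\<^sub>R b"
    have "(CLINT \<omega>|M. iexp (s * (w \<bullet> X \<omega>) + t * (b \<bullet> X \<omega>))) = (CLINT \<omega>|M. iexp (1 * (u \<bullet> X \<omega>)))"
      by (simp add: u_def inner_add_left)
    also have "\<dots> = char (distr M borel (\<lambda>\<omega>. u \<bullet> X \<omega>)) 1"
      by (simp add: char_def integral_distr)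
    also have "\<dots> = iexp (u \<bullet> mu) * complex_of_real (exp (- (u \<bullet> (Cov *v u)) / 2))"
      by (simp add: char_inner)
    also have "\<dots> = (iexp (s * (w \<bullet> mu)) * complex_of_real (exp (- ((w \<bullet> (Cov *v w)) * s^2) / 2))) *
        (iexp (t * (b \<bullet> mu)) * complex_of_real (exp (- ((b \<bullet> (Cov *v b)) * t^2) / 2)))"
    proof -
      have "iexp (u \<bullet> mu) = iexp (s * (w \<bullet> mu)) * iexp (t * (b \<bullet> mu))"
        by (simp add: u_def inner_add_left algebra_simps flip: exp_add)
      moreover have "exp (- (u \<bullet> (Cov *v u)) / 2) =
          exp (- ((w \<bullet> (Cov *v w)) * s^2) / 2) * exp (- ((b \<bullet> (Cov *v b)) * t^2) / 2)"
        by (simp add: u_def variance_split field_simps flip: exp_add)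
      ultimately show ?thesis by (simp add: mult_ac)
    qed
    also have "\<dots> = char (distr M borel (\<lambda>\<omega>. w \<bullet> X \<omega>)) s * char (distr M borel (\<lambda>\<omega>. b \<bullet> X \<omega>)) t"
      by (simp add: char_inner)
    finally show "(CLINT \<omega>|M. iexp (s * (w \<bullet> X \<omega>) + t * (b \<bullet> X \<omega>))) =
        char (distr M borel (\<lambda>\<omega>. w \<bullet> X \<omega>)) s * char (distr M borel (\<lambda>\<omega>. b \<bullet> X \<omega>)) t" .
  qed auto
qed

section \<open>Second moments on events depending on a projection\<close>

lemma (in prob_space) indep_var_square_indicator:
  fixes W Y :: "'a \<Rightarrow> real"
  assumes indep: "indep_var borel W borel Y"
    and int_W: "integrable M W" "integrable M (\<lambda>\<omega>. (W \<omega>)^2)"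
    and int_Y: "integrable M Y" "integrable M (\<lambda>\<omega>. (Y \<omega>)^2)"
    and [measurable]: "B \<in> sets borel"
  shows "(\<integral>\<^sup>+\<omega>. ennreal ((c * Y \<omega> + W \<omega>)^2 * indicator B (Y \<omega>)) \<partial>M) =
    (\<integral>\<^sup>+\<omega>. ennreal (((c * Y \<omega> + expectation W)^2 + variance W) * indicator B (Y \<omega>)) \<partial>M)"
proof -
  have [measurable]: "W \<in> borel_measurable M" "Y \<in> borel_measurable M"
    using int_W int_Y by auto
  define m where "m = expectation W"
  let ?I = "\<lambda>\<omega>. indicator B (Y \<omega>) :: real"
  let ?a = "\<lambda>\<omega>. c * Y \<omega> + m"
  have int_I: "integrable M ?I"
    by (intro integrable_const_bound[where B=1]) auto
  have int_a2: "integrable M (\<lambda>\<omega>. (?a \<omega>)^2)"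
    using int_Y by (simp add: power2_sum power_mult_distrib)
  have int_aI: "integrable M (\<lambda>\<omega>. ?a \<omega> * ?I \<omega>)"
    by (rule Bochner_Integration.integrable_bound[where f="?a"]) (use int_Y in \<open>auto simp: indicator_def\<close>)
  have int_a2I: "integrable M (\<lambda>\<omega>. (?a \<omega>)^2 * ?I \<omega>)"
    by (rule Bochner_Integration.integrable_bound[where f="\<lambda>\<omega>. (?a \<omega>)^2"])
      (use int_a2 in \<open>auto simp: indicator_def\<close>)
  have int_Wc: "integrable M (\<lambda>\<omega>. W \<omega> - m)" "integrable M (\<lambda>\<omega>. (W \<omega> - m)^2)"
    using int_W by (simp_all add: power2_diff)
  have "indep_var borel ((\<lambda>x. x - m) \<circ> W) borel ((\<lambda>y. (c * y + m) * indicator B y) \<circ> Y)"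
    by (rule indep_var_compose[OF indep]) auto
  then have indep_a: "indep_var borel (\<lambda>\<omega>. W \<omega> - m) borel (\<lambda>\<omega>. ?a \<omega> * ?I \<omega>)"
    by (simp add: comp_def)
  have "indep_var borel ((\<lambda>x. (x - m)^2) \<circ> W) borel ((\<lambda>y. indicator B y :: real) \<circ> Y)"
    by (rule indep_var_compose[OF indep]) auto
  then have indep_I: "indep_var borel (\<lambda>\<omega>. (W \<omega> - m)^2) borel ?I"
    by (simp add: comp_def)
  have cross: "expectation (\<lambda>\<omega>. (W \<omega> - m) * (?a \<omega> * ?I \<omega>)) = 0"
    using indep_var_lebesgue_integral[OF indep_a int_Wc(1) int_aI] int_W by (simp add: m_def prob_space)
  have square: "expectation (\<lambda>\<omega>. (W \<omega> - m)^2 * ?I \<omega>) = variance W * expectation ?I"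
    using indep_var_lebesgue_integral[OF indep_I int_Wc(2) int_I] by (simp add: m_def)
  note int_cross = indep_var_integrable[OF indep_a int_Wc(1) int_aI]
  note int_square = indep_var_integrable[OF indep_I int_Wc(2) int_I]
  have split: "(c * Y \<omega> + W \<omega>)^2 * ?I \<omega> =
      (?a \<omega>)^2 * ?I \<omega> + 2 * ((W \<omega> - m) * (?a \<omega> * ?I \<omega>)) + (W \<omega> - m)^2 * ?I \<omega>" for \<omega>
    by (simp add: power2_eq_square algebra_simps)
  have int_lhs: "integrable M (\<lambda>\<omega>. (c * Y \<omega> + W \<omega>)^2 * ?I \<omega>)"
    unfolding split using int_a2I int_cross int_square by auto
  have int_rhs: "integrable M (\<lambda>\<omega>. ((?a \<omega>)^2 + variance W) * ?I \<omega>)"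
    using int_a2I int_I by (simp add: distrib_right)
  have "expectation (\<lambda>\<omega>. (c * Y \<omega> + W \<omega>)^2 * ?I \<omega>) = expectation (\<lambda>\<omega>. ((?a \<omega>)^2 + variance W) * ?I \<omega>)"
    unfolding split using int_a2I int_cross int_square int_I cross square
    by (simp add: distrib_right)
  moreover have "0 \<le> variance W" by (simp add: integral_nonneg)
  ultimately show ?thesis
    using int_lhs int_rhs by (subst (1 2) nn_integral_eq_integral) (auto simp: m_def)
qed

lemma (in prob_space) gaussian_vec_square_indicator:
  fixes X :: "'a \<Rightarrow> real^'d"
  assumes X: "gaussian_vec M X mu Cov" and psd: "psd_matrix Cov"
    and orthogonal: "w \<bullet> (Cov *v b) = 0" and [measurable]: "B \<in> sets borel"
  shows "(\<integral>\<^sup>+\<omega>. ennreal (((c *\<^sub>R b + w) \<bullet> X \<omega>)^2 * indicator B (b \<bullet> X \<omega>)) \<partial>M) =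
    (\<integral>\<^sup>+\<omega>. ennreal (((c * (b \<bullet> X \<omega>) + w \<bullet> mu)^2 + w \<bullet> (Cov *v w)) * indicator B (b \<bullet> X \<omega>)) \<partial>M)"
  using indep_var_square_indicator[OF gaussian_vec_indep_inner[OF X psd orthogonal]
      gaussian_vec_inner(2,3)[OF X psd] gaussian_vec_inner(2,3)[OF X psd], of B c]
  by (simp add: gaussian_vec_inner(4,5)[OF X psd] inner_add_left add.commute)

lemma (in prob_space) indep_vars_nn_integral_split:
  fixes X :: "'i \<Rightarrow> 'a \<Rightarrow> 'b::topological_space" and h :: "'b \<Rightarrow> real"
  assumes I: "finite I" "i \<in> I" and indep: "indep_vars (\<lambda>_. borel) X I"
    and [measurable]: "h \<in> borel_measurable borel" "Measurable.pred (Pi\<^sub>M I (\<lambda>_. borel)) P"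
  shows "(\<integral>\<^sup>+\<omega>. ennreal (h (X i \<omega>) * of_bool (P (\<lambda>j\<in>I. X j \<omega>))) \<partial>M) =
    (\<integral>\<^sup>+z. (\<integral>\<^sup>+\<omega>. ennreal (h (X i \<omega>) * of_bool (P (z(i := X i \<omega>)))) \<partial>M)
      \<partial>Pi\<^sub>M (I - {i}) (\<lambda>j. distr M borel (X j)))"
proof -
  \<comment> \<open>Outside of I the family is made measurable, so that its laws form a product of probability spaces.\<close>
  define Y where "Y j = (if j \<in> I then X j else (\<lambda>_. undefined))" for j
  have [measurable]: "Y j \<in> borel_measurable M" for j
    using indep by (auto simp: Y_def indep_vars_def2)
  have [measurable]: "X i \<in> borel_measurable M"
    using indep I by (auto simp: indep_vars_def2)
  define L where "L j = distr M borel (Y j)" for j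
  have "prob_space (L j)" for j
    unfolding L_def by (rule prob_space_distr) measurable
  then interpret L: product_sigma_finite L
    by (auto simp: product_sigma_finite_def intro: prob_space_imp_sigma_finite)
  have sets_L [measurable_cong]: "sets (L j) = sets borel" for j by (simp add: L_def)
  have [measurable]: "Measurable.pred (Pi\<^sub>M I L) P"
    using measurable_cong_sets[OF sets_PiM_cong[OF refl sets_L] refl] by simp
  have [measurable]: "(\<lambda>z. z i) \<in> Pi\<^sub>M I (\<lambda>_. borel) \<rightarrow>\<^sub>M borel"
    using I by (intro measurable_component_singleton)
  have "indep_vars (\<lambda>_. borel) Y I"
    using indep by (rule indep_vars_cong[THEN iffD1, rotated -1]) (auto simp: Y_def)
  then have law: "distr M (Pi\<^sub>M I (\<lambda>_. borel)) (\<lambda>\<omega>. \<lambda>j\<in>I. Y j \<omega>) = Pi\<^sub>M I L"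
    using indep_vars_iff_distr_eq_PiM[where I=I and M'="\<lambda>_. borel" and X=Y] I
    by (auto simp: L_def[abs_def])
  have "(\<integral>\<^sup>+\<omega>. ennreal (h (X i \<omega>) * of_bool (P (\<lambda>j\<in>I. X j \<omega>))) \<partial>M) =
      (\<integral>\<^sup>+\<omega>. ennreal (h ((\<lambda>j\<in>I. Y j \<omega>) i) * of_bool (P (\<lambda>j\<in>I. Y j \<omega>))) \<partial>M)"
    using I by (simp add: Y_def cong: restrict_cong)
  also have "\<dots> = (\<integral>\<^sup>+z. ennreal (h (z i) * of_bool (P z)) \<partial>Pi\<^sub>M I L)"
    by (simp add: law[symmetric] nn_integral_distr)
  also have "\<dots> = (\<integral>\<^sup>+z. (\<integral>\<^sup>+y. ennreal (h y * of_bool (P (z(i := y)))) \<partial>L i) \<partial>Pi\<^sub>M (I - {i}) L)"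
    using L.product_nn_integral_insert[of "I - {i}" i "\<lambda>z. ennreal (h (z i) * of_bool (P z))"] I
    by (simp add: insert_absorb)
  also have "\<dots> = (\<integral>\<^sup>+z. (\<integral>\<^sup>+\<omega>. ennreal (h (X i \<omega>) * of_bool (P (z(i := X i \<omega>)))) \<partial>M) \<partial>Pi\<^sub>M (I - {i}) L)"
  proof (rule nn_integral_cong)
    fix z assume "z \<in> space (Pi\<^sub>M (I - {i}) L)"
    then have [measurable]: "(\<lambda>y. z(i := y)) \<in> measurable borel (Pi\<^sub>M I L)"
      using measurable_component_update[of z "I - {i}" L i] I by (simp add: insert_absorb)
    show "(\<integral>\<^sup>+y. ennreal (h y * of_bool (P (z(i := y)))) \<partial>L i) =
        (\<integral>\<^sup>+\<omega>. ennreal (h (X i \<omega>) * of_bool (P (z(i := X i \<omega>)))) \<partial>M)"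
      using I by (simp add: L_def Y_def nn_integral_distr)
  qed
  also have "Pi\<^sub>M (I - {i}) L = Pi\<^sub>M (I - {i}) (\<lambda>j. distr M borel (X j))"
    by (rule PiM_cong) (simp_all add: L_def Y_def)
  finally show ?thesis .
qed

lemma (in prob_space) indep_vars_nn_integral_section_cong:
  fixes X :: "'i \<Rightarrow> 'a \<Rightarrow> 'b::topological_space" and h1 h2 :: "'b \<Rightarrow> real"
  assumes I: "finite I" "i \<in> I" and indep: "indep_vars (\<lambda>_. borel) X I"
    and h: "h1 \<in> borel_measurable borel" "h2 \<in> borel_measurable borel"
    and P: "Measurable.pred (Pi\<^sub>M I (\<lambda>_. borel)) P"
    and sections: "\<And>z. \<exists>B\<in>sets borel. \<forall>y. P (z(i := y)) \<longleftrightarrow> g y \<in> B"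
    and eq: "\<And>B. B \<in> sets borel \<Longrightarrow>
      (\<integral>\<^sup>+\<omega>. ennreal (h1 (X i \<omega>) * indicator B (g (X i \<omega>))) \<partial>M) =
      (\<integral>\<^sup>+\<omega>. ennreal (h2 (X i \<omega>) * indicator B (g (X i \<omega>))) \<partial>M)"
  shows "(\<integral>\<^sup>+\<omega>. ennreal (h1 (X i \<omega>) * of_bool (P (\<lambda>j\<in>I. X j \<omega>))) \<partial>M) =
    (\<integral>\<^sup>+\<omega>. ennreal (h2 (X i \<omega>) * of_bool (P (\<lambda>j\<in>I. X j \<omega>))) \<partial>M)"
  unfolding indep_vars_nn_integral_split[OF I indep h(1) P] indep_vars_nn_integral_split[OF I indep h(2) P]
proof (rule nn_integral_cong)
  fix z
  obtain B where "B \<in> sets borel" and B: "\<And>y. P (z(i := y)) \<longleftrightarrow> g y \<in> B"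
    using sections[of z] by blast
  then show "(\<integral>\<^sup>+\<omega>. ennreal (h1 (X i \<omega>) * of_bool (P (z(i := X i \<omega>)))) \<partial>M) =
      (\<integral>\<^sup>+\<omega>. ennreal (h2 (X i \<omega>) * of_bool (P (z(i := X i \<omega>)))) \<partial>M)"
    using eq[of B] by (simp add: B indicator_def)
qed

lemma affine_square_le_between:
  fixes a t b c d :: real
  assumes "a \<le> t" "t \<le> b"
  shows "(c * t + d)^2 \<le> (c * a + d)^2 + (c * b + d)^2"
proof -
  have "c * a + d \<le> c * t + d \<and> c * t + d \<le> c * b + d \<or> c * b + d \<le> c * t + d \<and> c * t + d \<le> c * a + d"
    using assms by (cases "c \<ge> 0") (auto intro: mult_left_mono mult_left_mono_neg)
  then show ?thesis
    using abs_le_square_iff[of "c * t + d" "c * a + d"] abs_le_square_iff[of "c * t + d" "c * b + d"]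
    by (smt (verit) zero_le_power2)
qed

lemma (in prob_space) gaussian_vec_square_on_event:
  fixes X :: "'i \<Rightarrow> 'a \<Rightarrow> real^'d"
  assumes I: "finite I" "i \<in> I" and indep: "indep_vars (\<lambda>_. borel) X I"
    and gauss: "\<And>i. i \<in> I \<Longrightarrow> gaussian_vec M (X i) mu Cov" and psd: "psd_matrix Cov"
    and [measurable]: "Measurable.pred (Pi\<^sub>M I (\<lambda>_. borel)) P"
    and sections: "\<And>z. \<exists>B\<in>sets borel. \<forall>y. P (z(i := y)) \<longleftrightarrow> b \<bullet> y \<in> B"
    and orthogonal: "w \<bullet> (Cov *v b) = 0"
  shows "(LINT \<omega>|M. of_bool (P (\<lambda>j\<in>I. X j \<omega>)) * ((c *\<^sub>R b + w) \<bullet> X i \<omega>)^2) =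
    (LINT \<omega>|M. of_bool (P (\<lambda>j\<in>I. X j \<omega>)) * ((c * (b \<bullet> X i \<omega>) + w \<bullet> mu)^2 + w \<bullet> (Cov *v w)))"
proof -
  have X [measurable]: "X j \<in> borel_measurable M" if "j \<in> I" for j
    using gauss[OF that] by (simp add: gaussian_vec_def)
  have [measurable]: "(\<lambda>\<omega>. \<lambda>j\<in>I. X j \<omega>) \<in> M \<rightarrow>\<^sub>M Pi\<^sub>M I (\<lambda>_. borel)"
    by (rule measurable_restrict) (rule X)
  have [measurable]: "X i \<in> borel_measurable M"
    using X I by simp
  have "0 \<le> w \<bullet> (Cov *v w)"
    using psd by (simp add: psd_matrix_def)
  moreover have "(\<integral>\<^sup>+\<omega>. ennreal (((c *\<^sub>R b + w) \<bullet> X i \<omega>)^2 * of_bool (P (\<lambda>j\<in>I. X j \<omega>))) \<partial>M) =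
      (\<integral>\<^sup>+\<omega>. ennreal (((c * (b \<bullet> X i \<omega>) + w \<bullet> mu)^2 + w \<bullet> (Cov *v w)) * of_bool (P (\<lambda>j\<in>I. X j \<omega>))) \<partial>M)"
    by (rule indep_vars_nn_integral_section_cong[OF I indep _ _ _ sections])
      (measurable, measurable, measurable, rule gaussian_vec_square_indicator[OF gauss[OF I(2)] psd orthogonal])
  ultimately show ?thesis
    by (simp add: integral_eq_nn_integral mult.commute)
qed

lemma (in prob_space) gaussian_second_moment_between_le:
  fixes X :: "'i \<Rightarrow> 'a \<Rightarrow> real^'d"
  assumes I: "finite I" "a \<in> I" "l \<in> I" "b \<in> I"
    and indep: "indep_vars (\<lambda>_. borel) X I"
    and gauss: "\<And>i. i \<in> I \<Longrightarrow> gaussian_vec M (X i) mu Cov" and psd: "psd_matrix Cov"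
    and [measurable]: "Measurable.pred (Pi\<^sub>M I (\<lambda>_. borel)) P"
    and sections: "\<And>i z. i \<in> I \<Longrightarrow> \<exists>B\<in>sets borel. \<forall>y. P (z(i := y)) \<longleftrightarrow> beta \<bullet> y \<in> B"
    and between: "\<And>z. P z \<Longrightarrow> beta \<bullet> z a \<le> beta \<bullet> z l \<and> beta \<bullet> z l \<le> beta \<bullet> z b"
  shows "(LINT \<omega>|M. of_bool (P (\<lambda>j\<in>I. X j \<omega>)) * (x \<bullet> X l \<omega>)^2) \<le>
    (LINT \<omega>|M. of_bool (P (\<lambda>j\<in>I. X j \<omega>)) * (x \<bullet> X a \<omega>)^2) +
    (LINT \<omega>|M. of_bool (P (\<lambda>j\<in>I. X j \<omega>)) * (x \<bullet> X b \<omega>)^2)"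
proof -
  have X [measurable]: "X i \<in> borel_measurable M" if "i \<in> I" for i
    using gauss[OF that] by (simp add: gaussian_vec_def)
  have [measurable]: "(\<lambda>\<omega>. \<lambda>j\<in>I. X j \<omega>) \<in> M \<rightarrow>\<^sub>M Pi\<^sub>M I (\<lambda>_. borel)"
    by (rule measurable_restrict) (rule X)
  let ?E = "\<lambda>\<omega>. of_bool (P (\<lambda>j\<in>I. X j \<omega>)) :: real"
  obtain c w where x: "x = c *\<^sub>R beta + w" and orthogonal: "w \<bullet> (Cov *v beta) = 0"
    using psd_matrix_orthogonal_decomposition[OF psd] by blast
  define q where "q t = (c * t + w \<bullet> mu)^2 + w \<bullet> (Cov *v w)" for t
  have w_variance: "0 \<le> w \<bullet> (Cov *v w)"
    using psd by (simp add: psd_matrix_def)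
  then have q_nonneg: "0 \<le> q t" for t
    by (simp add: q_def)
  have on_event: "(LINT \<omega>|M. ?E \<omega> * (x \<bullet> X i \<omega>)^2) = (LINT \<omega>|M. ?E \<omega> * q (beta \<bullet> X i \<omega>))"
    if "i \<in> I" for i
    unfolding x q_def using that
    by (intro gaussian_vec_square_on_event[OF I(1) _ indep gauss psd _ sections orthogonal]) simp_all
  have integrable_q: "integrable M (\<lambda>\<omega>. ?E \<omega> * q (beta \<bullet> X i \<omega>))" if i: "i \<in> I" for i
  proof (rule Bochner_Integration.integrable_bound)
    show "integrable M (\<lambda>\<omega>. q (beta \<bullet> X i \<omega>))"
      using gaussian_vec_inner(2,3)[OF gauss[OF i] psd, of beta]
      by (simp add: q_def power2_sum power_mult_distrib)
  qed (use q_nonneg i in \<open>auto simp: abs_mult q_def[abs_def]\<close>)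
  have "?E \<omega> * q (beta \<bullet> X l \<omega>) \<le> ?E \<omega> * q (beta \<bullet> X a \<omega>) + ?E \<omega> * q (beta \<bullet> X b \<omega>)" for \<omega>
    using between[of "\<lambda>j\<in>I. X j \<omega>"] I w_variance affine_square_le_between[of "beta \<bullet> X a \<omega>" "beta \<bullet> X l \<omega>"
        "beta \<bullet> X b \<omega>" c "w \<bullet> mu"]
    by (cases "P (\<lambda>j\<in>I. X j \<omega>)") (auto simp: q_def)
  then have "(LINT \<omega>|M. ?E \<omega> * q (beta \<bullet> X l \<omega>)) \<le>
      (LINT \<omega>|M. ?E \<omega> * q (beta \<bullet> X a \<omega>) + ?E \<omega> * q (beta \<bullet> X b \<omega>))"
    using I integrable_q by (intro integral_mono) auto
  then show ?thesis
    using I integrable_q by (simp add: on_event)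
qed

section \<open>Integrals of outer products\<close>

lemma quadratic_form_outer: "x \<bullet> (outer y *v x) = (x \<bullet> y)^2"
  by (simp add: outer_def inner_vec_def matrix_vector_mult_def power2_eq_square sum_distrib_left
      sum_distrib_right algebra_simps)

lemma transpose_outer: "transpose (outer y) = outer y"
  by (simp add: outer_def transpose_def mult.commute)

lemma outer_eq_sum_axis:
  fixes y :: "real^'n"
  shows "outer y = (\<Sum>i\<in>UNIV. \<Sum>j\<in>UNIV. (y $ i * y $ j) *\<^sub>R axis i (axis j 1))"
proof -
  have "(axis i (axis j 1) :: real^'n^'n) $ a $ b = (if b = j then if a = i then 1 else 0 else 0)" for i j a b
    by (simp add: axis_def)
  then show ?thesis
    by (simp add: outer_def vec_eq_iff if_distrib[of "times _"] cong: if_cong)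
qed

lemma integrable_of_bool_scaleR_outer:
  fixes X :: "'a \<Rightarrow> real^'d"
  assumes [measurable]: "X \<in> borel_measurable M" "Measurable.pred M E"
    and square_integrable: "\<And>u. integrable M (\<lambda>\<omega>. (u \<bullet> X \<omega>)^2)"
  shows "integrable M (\<lambda>\<omega>. of_bool (E \<omega>) *\<^sub>R outer (X \<omega>))"
proof -
  have [measurable]: "(\<lambda>\<omega>. X \<omega> $ i) \<in> borel_measurable M" for i
    using borel_measurable_inner[of "\<lambda>_. axis i 1" M X] by (simp add: inner_axis')
  have "integrable M (\<lambda>\<omega>. of_bool (E \<omega>) * (X \<omega> $ i * X \<omega> $ j))" for i j
  proof (rule Bochner_Integration.integrable_bound)
    show "integrable M (\<lambda>\<omega>. (axis i 1 \<bullet> X \<omega>)^2 + (axis j 1 \<bullet> X \<omega>)^2)"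
      using square_integrable by auto
    show "AE \<omega> in M. norm (of_bool (E \<omega>) * (X \<omega> $ i * X \<omega> $ j)) \<le>
        norm ((axis i 1 \<bullet> X \<omega>)^2 + (axis j 1 \<bullet> X \<omega>)^2)"
    proof (intro AE_I2)
      fix \<omega>
      have "\<bar>X \<omega> $ i\<bar> * \<bar>X \<omega> $ j\<bar> \<le> (X \<omega> $ i)^2 + (X \<omega> $ j)^2"
        using sum_squares_bound[of "\<bar>X \<omega> $ i\<bar>" "\<bar>X \<omega> $ j\<bar>"]
          mult_nonneg_nonneg[OF abs_ge_zero abs_ge_zero, of "X \<omega> $ i" "X \<omega> $ j"]
        unfolding power2_abs by linarith
      then show "norm (of_bool (E \<omega>) * (X \<omega> $ i * X \<omega> $ j)) \<le>
          norm ((axis i 1 \<bullet> X \<omega>)^2 + (axis j 1 \<bullet> X \<omega>)^2)"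
        by (simp add: inner_axis' abs_mult)
    qed
  qed measurable
  then have "integrable M (\<lambda>\<omega>. \<Sum>i\<in>UNIV. \<Sum>j\<in>UNIV.
      (of_bool (E \<omega>) * (X \<omega> $ i * X \<omega> $ j)) *\<^sub>R axis i (axis j (1::real)))"
    by (auto intro!: integrable_sum)
  moreover have "(\<lambda>\<omega>. of_bool (E \<omega>) *\<^sub>R outer (X \<omega>)) = (\<lambda>\<omega>. \<Sum>i\<in>UNIV. \<Sum>j\<in>UNIV.
      (of_bool (E \<omega>) * (X \<omega> $ i * X \<omega> $ j)) *\<^sub>R axis i (axis j (1::real)))"
    by (simp only: outer_eq_sum_axis scaleR_sum_right scaleR_scaleR)
  ultimately show ?thesis
    by (simp only:)
qed

lemma bounded_linear_quadratic_form: "bounded_linear (\<lambda>A::real^'n^'n. x \<bullet> (A *v x))"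
  unfolding linear_conv_bounded_linear[symmetric]
  by (intro linearI)
    (simp_all add: matrix_vector_mult_def inner_vec_def sum_distrib_left sum.distrib algebra_simps)

lemma bounded_linear_transpose: "bounded_linear (transpose :: real^'n^'m \<Rightarrow> real^'m^'n)"
  unfolding linear_conv_bounded_linear[symmetric]
  by (intro linearI) (simp_all add: transpose_def vec_eq_iff)

lemma quadratic_form_integral:
  fixes F :: "'a \<Rightarrow> real^'n^'n"
  assumes "integrable M F"
  shows "x \<bullet> (integral\<^sup>L M F *v x) = (LINT \<omega>|M. x \<bullet> (F \<omega> *v x))"
  using integral_bounded_linear[OF bounded_linear_quadratic_form assms] by simp

lemma transpose_integral:
  fixes F :: "'a \<Rightarrow> real^'n^'m"
  assumes "integrable M F"
  shows "transpose (integral\<^sup>L M F) = (LINT \<omega>|M. transpose (F \<omega>))"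
  using integral_bounded_linear[OF bounded_linear_transpose assms] by simp

lemma loewner_leI:
  fixes A B :: "real^'n^'n"
  assumes "transpose A = A" "transpose B = B" and "\<And>x. x \<bullet> (A *v x) \<le> x \<bullet> (B *v x)"
  shows "A \<preceq>\<^sub>L B"
  using assms
  by (simp add: loewner_le_def psd_matrix_def matrix_vector_mult_diff_rdistrib inner_diff_right
      vec_eq_iff transpose_def)

lemma loewner_le_integral_outerI:
  fixes U V W :: "'a \<Rightarrow> real^'d"
  assumes [measurable]: "U \<in> borel_measurable M" "V \<in> borel_measurable M" "W \<in> borel_measurable M"
    "Measurable.pred M E"
    and square_integrable: "\<And>u. integrable M (\<lambda>\<omega>. (u \<bullet> U \<omega>)^2)" "\<And>u. integrable M (\<lambda>\<omega>. (u \<bullet> V \<omega>)^2)"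
      "\<And>u. integrable M (\<lambda>\<omega>. (u \<bullet> W \<omega>)^2)"
    and second_moment_le: "\<And>x. (LINT \<omega>|M. of_bool (E \<omega>) * (x \<bullet> U \<omega>)^2) \<le>
      (LINT \<omega>|M. of_bool (E \<omega>) * (x \<bullet> V \<omega>)^2) + (LINT \<omega>|M. of_bool (E \<omega>) * (x \<bullet> W \<omega>)^2)"
  shows "(\<integral>\<omega>. of_bool (E \<omega>) *\<^sub>R outer (U \<omega>) \<partial>M) \<preceq>\<^sub>L
    (\<integral>\<omega>. of_bool (E \<omega>) *\<^sub>R outer (V \<omega>) \<partial>M) + (\<integral>\<omega>. of_bool (E \<omega>) *\<^sub>R outer (W \<omega>) \<partial>M)"
proof -
  have integrable: "integrable M (\<lambda>\<omega>. of_bool (E \<omega>) *\<^sub>R outer (Y \<omega>))"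
    if "Y \<in> borel_measurable M" "\<And>u. integrable M (\<lambda>\<omega>. (u \<bullet> Y \<omega>)^2)" for Y :: "'a \<Rightarrow> real^'d"
    using that by (intro integrable_of_bool_scaleR_outer) auto
  have quadratic: "x \<bullet> ((\<integral>\<omega>. of_bool (E \<omega>) *\<^sub>R outer (Y \<omega>) \<partial>M) *v x) =
      (LINT \<omega>|M. of_bool (E \<omega>) * (x \<bullet> Y \<omega>)^2)"
    if "integrable M (\<lambda>\<omega>. of_bool (E \<omega>) *\<^sub>R outer (Y \<omega>))" for Y :: "'a \<Rightarrow> real^'d" and x
    using quadratic_form_integral[OF that]
    by (simp add: quadratic_form_outer scaleR_matrix_vector_assoc[symmetric])
  have symmetric: "transpose (\<integral>\<omega>. of_bool (E \<omega>) *\<^sub>R outer (Y \<omega>) \<partial>M) =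
      (\<integral>\<omega>. of_bool (E \<omega>) *\<^sub>R outer (Y \<omega>) \<partial>M)"
    if "integrable M (\<lambda>\<omega>. of_bool (E \<omega>) *\<^sub>R outer (Y \<omega>))" for Y :: "'a \<Rightarrow> real^'d"
    using transpose_integral[OF that] by (simp add: transpose_scalar transpose_outer)
  note integrable_UVW = integrable[OF assms(1) square_integrable(1)] integrable[OF assms(2) square_integrable(2)]
    integrable[OF assms(3) square_integrable(3)]
  have transpose_add: "transpose (A + B) = transpose A + transpose B" for A B :: "real^'d^'d"
    by (simp add: vec_eq_iff transpose_def)
  show ?thesis
    by (rule loewner_leI)
      (simp_all add: symmetric quadratic integrable_UVW transpose_add matrix_vector_mult_add_rdistrib
        inner_add_right second_moment_le)
qed

section \<open>Ordering events\<close>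

definition strict_mono_upto :: "(nat \<Rightarrow> real) \<Rightarrow> nat \<Rightarrow> bool" where
  "strict_mono_upto f K \<longleftrightarrow> (\<forall>j\<in>{1..<K}. f j < f (Suc j))"

lemma strict_mono_upto_le:
  assumes "strict_mono_upto f K" "1 \<le> i" "i \<le> j" "j \<le> K"
  shows "f i \<le> f j"
  using assms(3,4)
proof (induction j rule: dec_induct)
  case (step n)
  then have "f i \<le> f n" "f n < f (Suc n)"
    using assms(1,2) by (auto simp: strict_mono_upto_def)
  then show ?case by simp
qed simp

lemma pred_strict_mono_upto:
  assumes [measurable]: "\<And>j. j \<in> {1..K} \<Longrightarrow> (\<lambda>x. g x j) \<in> borel_measurable N"
  shows "Measurable.pred N (\<lambda>x. strict_mono_upto (g x) K)"
  unfolding strict_mono_upto_def by (intro pred_intros_finite) auto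

lemma strict_mono_upto_update_sections:
  "\<exists>B\<in>sets borel. \<forall>y. strict_mono_upto (\<lambda>j. beta \<bullet> (z(i := y)) (p j)) K \<longleftrightarrow> beta \<bullet> y \<in> B"
proof
  let ?B = "{t. strict_mono_upto (\<lambda>j. if p j = i then t else beta \<bullet> z (p j)) K}"
  have "Measurable.pred borel (\<lambda>t. strict_mono_upto (\<lambda>j. if p j = i then t else beta \<bullet> z (p j)) K)"
    by (intro pred_strict_mono_upto) simp
  then show "?B \<in> sets borel" by (simp add: pred_def)
  show "\<forall>y. strict_mono_upto (\<lambda>j. beta \<bullet> (z(i := y)) (p j)) K \<longleftrightarrow> beta \<bullet> y \<in> ?B"
    by (simp add: if_distrib[of "inner beta"] cong: if_cong)
qed

theorem lemma11:
  fixes M :: "'a measure" and X :: "nat \<Rightarrow> 'a \<Rightarrow> real^'d"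
    and mu beta :: "real^'d" and Cov :: "real^'d^'d"
    and K k :: nat and p :: "nat \<Rightarrow> nat"
  assumes "prob_space M"
    and "K \<ge> 3"
    and "psd_matrix Cov"
    and "\<And>i. i \<in> {1..K} \<Longrightarrow> gaussian_vec M (X i) mu Cov"
    and "prob_space.indep_vars M (\<lambda>_. borel) X {1..K}"
    and "p permutes {1..K}"
    and "k \<in> {2..K-1}"
  shows "let E = (\<lambda>\<omega>. \<forall>j\<in>{1..<K}. X (p j) \<omega> \<bullet> beta < X (p (Suc j)) \<omega> \<bullet> beta) in
    (\<integral>\<omega>. of_bool (E \<omega>) *\<^sub>R outer (X (p k) \<omega>) \<partial>M)
      \<preceq>\<^sub>L (\<integral>\<omega>. of_bool (E \<omega>) *\<^sub>R outer (X (p 1) \<omega>) \<partial>M)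
          + (\<integral>\<omega>. of_bool (E \<omega>) *\<^sub>R outer (X (p K) \<omega>) \<partial>M)"
proof -
  interpret prob_space M by fact
  define P where "P z \<longleftrightarrow> strict_mono_upto (\<lambda>j. beta \<bullet> z (p j)) K" for z :: "nat \<Rightarrow> real^'d"
  have p_in: "p j \<in> {1..K}" if "j \<in> {1..K}" for j
    using permutes_in_image[OF assms(6)] that by simp
  have idx: "p 1 \<in> {1..K}" "p k \<in> {1..K}" "p K \<in> {1..K}"
    using p_in assms(2,7) by auto
  have X [measurable]: "X i \<in> borel_measurable M" if "i \<in> {1..K}" for i
    using assms(4)[OF that] by (simp add: gaussian_vec_def)
  have P_measurable [measurable]: "Measurable.pred (Pi\<^sub>M {1..K} (\<lambda>_. borel)) P"
    unfolding P_def using p_in by (intro pred_strict_mono_upto) simp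
  have [measurable]: "(\<lambda>\<omega>. \<lambda>j\<in>{1..K}. X j \<omega>) \<in> M \<rightarrow>\<^sub>M Pi\<^sub>M {1..K} (\<lambda>_. borel)"
    by (intro measurable_restrict X)
  then have E_measurable: "Measurable.pred M (\<lambda>\<omega>. P (\<lambda>j\<in>{1..K}. X j \<omega>))"
    by measurable
  have event: "(\<forall>j\<in>{1..<K}. X (p j) \<omega> \<bullet> beta < X (p (Suc j)) \<omega> \<bullet> beta) \<longleftrightarrow> P (\<lambda>j\<in>{1..K}. X j \<omega>)"
    for \<omega> using p_in by (auto simp: P_def strict_mono_upto_def inner_commute)
  have sections: "\<exists>B\<in>sets borel. \<forall>y. P (z(i := y)) \<longleftrightarrow> beta \<bullet> y \<in> B" for i z
    unfolding P_def by (rule strict_mono_upto_update_sections)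
  have between: "beta \<bullet> z (p 1) \<le> beta \<bullet> z (p k) \<and> beta \<bullet> z (p k) \<le> beta \<bullet> z (p K)" if "P z" for z
    using strict_mono_upto_le[OF that[unfolded P_def]] assms(2,7) by auto
  note second_moments = gaussian_second_moment_between_le[OF finite_atLeastAtMost idx assms(5,4,3)
      P_measurable sections between]
  note square_integrable = gaussian_vec_inner(3)[OF assms(4) assms(3)]
  show ?thesis
    unfolding Let_def event
    by (rule loewner_le_integral_outerI[OF X[OF idx(2)] X[OF idx(1)] X[OF idx(3)] E_measurable
          square_integrable[OF idx(2)] square_integrable[OF idx(1)] square_integrable[OF idx(3)]
          second_moments])
qed

end
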